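(* Let $S\subseteq\mathbb{N}^{\mathbb{N}}$. Then $S$ is $0$th-order guessable if and only if $S\in\mathbf{\Delta}^0_2$; and for every integer $m>0$, $S$ is $m$th-order guessable if and only if $S\in\mathbf{\Delta}^0_{m+1}$.
   Context: Baire space $\mathbb{N}^{\mathbb{N}}$ carries the product of discrete topologies; $\mathbf{\Sigma}^0_n,\mathbf{\Pi}^0_n,\mathbf{\Delta}^0_n$ are the boldface Borel pointclasses. $\mathbb{N}^{<\mathbb{N}}$ is the set of finite sequences of naturals. The language $\mathscr{L}_{\max}$ is the first-order language (with equality) having: a constant symbol $\overline{n}$ for each $n\in\mathbb{N}$; an $n$-ary function symbol $\tilde w$ for each $w:\mathbb{N}^n\to\mathbb{N}$; an $n$-ary predicate symbol $\tilde p$ for each $p\subseteq\mathbb{N}^n$; a special unary function symbol $\mathbf{f}$; and, for every $n$ and every $G:\mathbb{N}^n\times\mathbb{N}^{<\mathbb{N}}\to\mathbb{N}$, an $(n+1)$-ary function symbol $G\circ\mathbf{f}$. For $f\in\mathbb{N}^{\mathbb{N}}$, $\mathscr{M}_f$ is the structure with universe $\mathbb{N}$ interpreting $\overline n$ as $n$, $\tilde w$ as $w$, $\tilde p$ as $p$, $\mathbf f$ as $f$, and $G\circ\mathbf f$ as $(m_1,\dots,m_n,m)\mapsto G(m_1,\dots,m_n,f(0),\dots,f(m))$. For a sentence $\phi$, $f(\phi)=1$ if $\mathscr{M}_f\models\phi$ and $f(\phi)=0$ otherwise. Formula classes: "quantifier-free" means containing no quantifiers at all (not even bounded ones). $\Sigma_0=\Pi_0=\Delta_0$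 is the set of quantifier-free formulas; $\Sigma_{n+1}=\{\exists x\,\phi:\phi\in\Pi_n\}$ and $\Pi_{n+1}=\{\forall x\,\phi:\phi\in\Sigma_n\}$; a formula is $\Delta_{n+1}$ if it is equivalent, in every structure $\mathscr{M}_f$ ($f\in\mathbb{N}^{\mathbb{N}}$), to some $\Sigma_{n+1}$ formula of $\mathscr{L}_{\max}$ and also to some $\Pi_{n+1}$ formula of $\mathscr{L}_{\max}$. For a set $\Sigma$ of symbols of $\mathscr{L}_{\max}$, a sentence "of $\mathscr{L}_{\max}\cap\Sigma$" is an $\mathscr{L}_{\max}$-sentence all of whose non-logical symbols lie in $\Sigma$. Definition ($m$th-order guessable): $S\subseteq\mathbb{N}^{\mathbb{N}}$ is $m$th-order guessable if there exist a countable set $\Sigma$ of $\mathscr{L}_{\max}$-symbols, a listing $\phi_0,\phi_1,\dots$ of all $\Delta_m$ sentences of $\mathscr{L}_{\max}\cap\Sigma$, and a function $G:\{0,1\}^{<\mathbb{N}}\to\mathbb{N}$ such that for every $f:\mathbb{N}\to\mathbb{N}$, $\lim_{n\to\infty}G(f(\phi_0),\dots,f(\phi_n))$ equals $1$ if $f\in S$ and $0$ if $f\notin S$. *)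

theory Defs
  imports "HOL-Analysis.Analysis"
begin

text \<open>Baire space is nat \<Rightarrow> nat with the product topology (Function_Topology) of
  the discrete (order) topology on nat. Indices n \<ge> 1; level 0 is unused.\<close>

fun bSigma :: "nat \<Rightarrow> (nat \<Rightarrow> nat) set set" where
  "bSigma 0 = {}"
| "bSigma (Suc 0) = {A. open A}"
| "bSigma (Suc (Suc n)) =
     {\<Union>i::nat. A i | A. \<forall>i. A i \<in> uminus ` bSigma (Suc n)}"

definition bPi :: "nat \<Rightarrow> (nat \<Rightarrow> nat) set set" where
  "bPi n = uminus ` bSigma n"

definition bDelta :: "nat \<Rightarrow> (nat \<Rightarrow> nat) set set" where
  "bDelta n = bSigma n \<inter> bPi n"

text \<open>An n-ary function symbol for w : N^n \<rightarrow> N is SFun n w, where w acts on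
  argument lists (only its values on lists of length n matter); similarly for
  predicates (p \<subseteq> N^n as a set of lists of length n) and for G \<circ> f.\<close>

datatype sym =
    SConst nat
  | SFun nat "nat list \<Rightarrow> nat"
  | SPred nat "nat list set"
  | SF
  | SGF nat "nat list \<Rightarrow> nat list \<Rightarrow> nat"

datatype trm =
    Var nat
  | Cst nat
  | App nat "nat list \<Rightarrow> nat" "trm list"
  | Fap trm
  | GFap nat "nat list \<Rightarrow> nat list \<Rightarrow> nat" "trm list" trm

datatype fm =
    Eq trm trm
  | Pred nat "nat list set" "trm list"
  | Neg fm
  | Conj fm fm
  | Disj fm fm
  | Imp fm fm
  | Ex nat fm
  | All nat fm

fun teval :: "(nat \<Rightarrow> nat) \<Rightarrow> (nat \<Rightarrow> nat) \<Rightarrow> trm \<Rightarrow> nat" where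
  "teval f e (Var x) = e x"
| "teval f e (Cst n) = n"
| "teval f e (App k w ts) = w (map (teval f e) ts)"
| "teval f e (Fap t) = f (teval f e t)"
| "teval f e (GFap k G ts t) = G (map (teval f e) ts) (map f [0..<Suc (teval f e t)])"

fun holds :: "(nat \<Rightarrow> nat) \<Rightarrow> (nat \<Rightarrow> nat) \<Rightarrow> fm \<Rightarrow> bool" where
  "holds f e (Eq s t) = (teval f e s = teval f e t)"
| "holds f e (Pred k p ts) = (map (teval f e) ts \<in> p)"
| "holds f e (Neg \<phi>) = (\<not> holds f e \<phi>)"
| "holds f e (Conj \<phi> \<psi>) = (holds f e \<phi> \<and> holds f e \<psi>)"
| "holds f e (Disj \<phi> \<psi>) = (holds f e \<phi> \<or> holds f e \<psi>)"
| "holds f e (Imp \<phi> \<psi>) = (holds f e \<phi> \<longrightarrow> holds f e \<psi>)"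
| "holds f e (Ex x \<phi>) = (\<exists>n. holds f (e(x := n)) \<phi>)"
| "holds f e (All x \<phi>) = (\<forall>n. holds f (e(x := n)) \<phi>)"

fun wf_trm :: "trm \<Rightarrow> bool" where
  "wf_trm (Var x) = True"
| "wf_trm (Cst n) = True"
| "wf_trm (App k w ts) = (length ts = k \<and> (\<forall>t\<in>set ts. wf_trm t))"
| "wf_trm (Fap t) = wf_trm t"
| "wf_trm (GFap k G ts t) = (length ts = k \<and> (\<forall>s\<in>set ts. wf_trm s) \<and> wf_trm t)"

fun wf_fm :: "fm \<Rightarrow> bool" where
  "wf_fm (Eq s t) = (wf_trm s \<and> wf_trm t)"
| "wf_fm (Pred k p ts) = (length ts = k \<and> (\<forall>t\<in>set ts. wf_trm t))"
| "wf_fm (Neg \<phi>) = wf_fm \<phi>"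
| "wf_fm (Conj \<phi> \<psi>) = (wf_fm \<phi> \<and> wf_fm \<psi>)"
| "wf_fm (Disj \<phi> \<psi>) = (wf_fm \<phi> \<and> wf_fm \<psi>)"
| "wf_fm (Imp \<phi> \<psi>) = (wf_fm \<phi> \<and> wf_fm \<psi>)"
| "wf_fm (Ex x \<phi>) = wf_fm \<phi>"
| "wf_fm (All x \<phi>) = wf_fm \<phi>"

fun fv_trm :: "trm \<Rightarrow> nat set" where
  "fv_trm (Var x) = {x}"
| "fv_trm (Cst n) = {}"
| "fv_trm (App k w ts) = (\<Union>t\<in>set ts. fv_trm t)"
| "fv_trm (Fap t) = fv_trm t"
| "fv_trm (GFap k G ts t) = (\<Union>s\<in>set ts. fv_trm s) \<union> fv_trm t"

fun fv_fm :: "fm \<Rightarrow> nat set" where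
  "fv_fm (Eq s t) = fv_trm s \<union> fv_trm t"
| "fv_fm (Pred k p ts) = (\<Union>t\<in>set ts. fv_trm t)"
| "fv_fm (Neg \<phi>) = fv_fm \<phi>"
| "fv_fm (Conj \<phi> \<psi>) = fv_fm \<phi> \<union> fv_fm \<psi>"
| "fv_fm (Disj \<phi> \<psi>) = fv_fm \<phi> \<union> fv_fm \<psi>"
| "fv_fm (Imp \<phi> \<psi>) = fv_fm \<phi> \<union> fv_fm \<psi>"
| "fv_fm (Ex x \<phi>) = fv_fm \<phi> - {x}"
| "fv_fm (All x \<phi>) = fv_fm \<phi> - {x}"

fun syms_trm :: "trm \<Rightarrow> sym set" where
  "syms_trm (Var x) = {}"
| "syms_trm (Cst n) = {SConst n}"
| "syms_trm (App k w ts) = insert (SFun k w) (\<Union>t\<in>set ts. syms_trm t)"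
| "syms_trm (Fap t) = insert SF (syms_trm t)"
| "syms_trm (GFap k G ts t) = insert (SGF k G) ((\<Union>s\<in>set ts. syms_trm s) \<union> syms_trm t)"

fun syms_fm :: "fm \<Rightarrow> sym set" where
  "syms_fm (Eq s t) = syms_trm s \<union> syms_trm t"
| "syms_fm (Pred k p ts) = insert (SPred k p) (\<Union>t\<in>set ts. syms_trm t)"
| "syms_fm (Neg \<phi>) = syms_fm \<phi>"
| "syms_fm (Conj \<phi> \<psi>) = syms_fm \<phi> \<union> syms_fm \<psi>"
| "syms_fm (Disj \<phi> \<psi>) = syms_fm \<phi> \<union> syms_fm \<psi>"
| "syms_fm (Imp \<phi> \<psi>) = syms_fm \<phi> \<union> syms_fm \<psi>"
| "syms_fm (Ex x \<phi>) = syms_fm \<phi>"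
| "syms_fm (All x \<phi>) = syms_fm \<phi>"

definition sentence :: "fm \<Rightarrow> bool" where
  "sentence \<phi> \<longleftrightarrow> wf_fm \<phi> \<and> fv_fm \<phi> = {}"

fun qfree :: "fm \<Rightarrow> bool" where
  "qfree (Eq s t) = True"
| "qfree (Pred k p ts) = True"
| "qfree (Neg \<phi>) = qfree \<phi>"
| "qfree (Conj \<phi> \<psi>) = (qfree \<phi> \<and> qfree \<psi>)"
| "qfree (Disj \<phi> \<psi>) = (qfree \<phi> \<and> qfree \<psi>)"
| "qfree (Imp \<phi> \<psi>) = (qfree \<phi> \<and> qfree \<psi>)"
| "qfree (Ex x \<phi>) = False"
| "qfree (All x \<phi>) = False"

fun SigmaF :: "nat \<Rightarrow> fm \<Rightarrow> bool" and PiF :: "nat \<Rightarrow> fm \<Rightarrow> bool" where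
  "SigmaF 0 \<phi> = qfree \<phi>"
| "PiF 0 \<phi> = qfree \<phi>"
| "SigmaF (Suc n) \<phi> = (\<exists>x \<psi>. \<phi> = Ex x \<psi> \<and> PiF n \<psi>)"
| "PiF (Suc n) \<phi> = (\<exists>x \<psi>. \<phi> = All x \<psi> \<and> SigmaF n \<psi>)"

definition fm_equiv :: "fm \<Rightarrow> fm \<Rightarrow> bool" where
  "fm_equiv \<phi> \<psi> \<longleftrightarrow> (\<forall>f e. holds f e \<phi> = holds f e \<psi>)"

fun DeltaF :: "nat \<Rightarrow> fm \<Rightarrow> bool" where
  "DeltaF 0 \<phi> = qfree \<phi>"
| "DeltaF (Suc n) \<phi> =
     ((\<exists>\<psi>. wf_fm \<psi> \<and> SigmaF (Suc n) \<psi> \<and> fm_equiv \<phi> \<psi>) \<and>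
      (\<exists>\<theta>. wf_fm \<theta> \<and> PiF (Suc n) \<theta> \<and> fm_equiv \<phi> \<theta>))"

text \<open>f(phi) for a sentence phi (the assignment is irrelevant for sentences).\<close>
definition fval :: "(nat \<Rightarrow> nat) \<Rightarrow> fm \<Rightarrow> nat" where
  "fval f \<phi> = (if holds f (\<lambda>_. 0) \<phi> then 1 else 0)"

definition guessable :: "nat \<Rightarrow> (nat \<Rightarrow> nat) set \<Rightarrow> bool" where
  "guessable m S \<longleftrightarrow>
     (\<exists>(\<Sigma> :: sym set) (phi :: nat \<Rightarrow> fm) (G :: nat list \<Rightarrow> nat).
        countable \<Sigma> \<and>
        range phi = {\<phi>. sentence \<phi> \<and> DeltaF m \<phi> \<and> syms_fm \<phi> \<subseteq> \<Sigma>} \<and>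
        (\<forall>f :: nat \<Rightarrow> nat.
           (\<lambda>n. G (map (\<lambda>i. fval f (phi i)) [0..<Suc n]))
             \<longlonglongrightarrow> (if f \<in> S then 1 else 0)))"

end

theory Submission
  imports Defs
begin

(* (1) Guessable implies Delta^0_{m+1} (Delta^0_2 for m = 0).  Every term is a
   locally constant function of f (it reads only a finite initial segment of f),
   hence quantifier-free sentences define clopen sets and Sigma_k / Pi_k sentences
   define boldface Sigma^0_k / Pi^0_k sets.  The n-th guess is a Boolean
   combination of finitely many such sets, and an eventual limit of Delta^0_{k+1}
   sets is Delta^0_{k+2}.

   (2) Conversely, every Delta^0_{k+2} set is an eventual limit of Delta^0_{k+1}
   "stage sets" A n, which for k = 0 depend only on the first n values of f.
   Each A n is defined by a Delta_{k+1} sentence (for k = 0 by a quantifier-free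
   one, reading a finite prefix of f through a symbol G o f); the sentences over
   the countably many symbols involved form a countable set, and interleaving
   the defining sentences with an enumeration of that set gives the guesser. *)

section \<open>Baire space: agreement on initial segments\<close>

definition agree :: "nat \<Rightarrow> (nat \<Rightarrow> nat) \<Rightarrow> (nat \<Rightarrow> nat) \<Rightarrow> bool" where
  "agree n g f \<longleftrightarrow> (\<forall>j<n. g j = f j)"

lemma agree_mono: "agree n g f \<Longrightarrow> k \<le> n \<Longrightarrow> agree k g f"
  by (auto simp: agree_def)

lemma agree_refl: "agree n f f"
  by (simp add: agree_def)

lemma agree_sym: "agree n g f \<Longrightarrow> agree n f g"
  by (simp add: agree_def)

lemma agree_trans: "agree n h g \<Longrightarrow> agree n g f \<Longrightarrow> agree n h f"
  by (simp add: agree_def)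

lemma agree_max [simp]: "agree (max a b) g f \<longleftrightarrow> agree a g f \<and> agree b g f"
  unfolding agree_def by (auto simp: less_max_iff_disj)

lemma open_baire_iff:
  "open (U :: (nat \<Rightarrow> nat) set) \<longleftrightarrow> (\<forall>f\<in>U. \<exists>n. \<forall>g. agree n g f \<longrightarrow> g \<in> U)"
proof
  assume "open U"
  then have o: "openin (product_topology (\<lambda>i. euclidean) UNIV) U"
    by (simp add: open_fun_def)
  show "\<forall>f\<in>U. \<exists>n. \<forall>g. agree n g f \<longrightarrow> g \<in> U"
  proof
    fix f assume "f \<in> U"
    then obtain V where fin: "finite {i. V i \<noteq> (UNIV :: nat set)}"
      and fV: "f \<in> Pi\<^sub>E UNIV V" and sub: "Pi\<^sub>E UNIV V \<subseteq> U"
      using o unfolding openin_product_topology_alt by auto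
    obtain n where n: "{i. V i \<noteq> UNIV} \<subseteq> {..<n}"
      using finite_nat_bounded[OF fin] by blast
    have "g \<in> Pi\<^sub>E UNIV V" if "agree n g f" for g
    proof -
      have "g i \<in> V i" for i
        using that n fV by (cases "V i = UNIV") (auto simp: PiE_iff agree_def)
      then show ?thesis by (auto simp: PiE_iff)
    qed
    then show "\<exists>n. \<forall>g. agree n g f \<longrightarrow> g \<in> U" using sub by blast
  qed
next
  assume H: "\<forall>f\<in>U. \<exists>n. \<forall>g. agree n g f \<longrightarrow> g \<in> U"
  show "open U" unfolding open_fun_def openin_product_topology_alt
  proof
    fix f assume "f \<in> U"
    then obtain n where n: "\<forall>g. agree n g f \<longrightarrow> g \<in> U" using H by blast
    define V where "V i = (if i < n then {f i} else (UNIV :: nat set))" for i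
    have "{i \<in> UNIV. V i \<noteq> topspace euclidean} \<subseteq> {..<n}" by (auto simp: V_def)
    then have "finite {i \<in> UNIV. V i \<noteq> topspace euclidean}" by (rule finite_subset) auto
    moreover have "\<forall>i\<in>UNIV. openin euclidean (V i)" by (simp add: open_discrete)
    moreover have "f \<in> Pi\<^sub>E UNIV V" by (auto simp: V_def PiE_iff)
    moreover have "Pi\<^sub>E UNIV V \<subseteq> U"
    proof
      fix g assume "g \<in> Pi\<^sub>E UNIV V"
      then have "g j = f j" if "j < n" for j
        using PiE_mem[of g UNIV V j] that by (simp add: V_def)
      then have "agree n g f" by (simp add: agree_def)
      then show "g \<in> U" using n by blast
    qed
    ultimately show "\<exists>V. finite {i \<in> UNIV. V i \<noteq> topspace euclidean} \<and>
        (\<forall>i\<in>UNIV. openin euclidean (V i)) \<and> f \<in> Pi\<^sub>E UNIV V \<and> Pi\<^sub>E UNIV V \<subseteq> U"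
      by blast
  qed
qed

text \<open>A functional on Baire space is locally constant if its value at f is
  determined by some finite initial segment of f; this is continuity into a
  discrete space.  All term values of the language are of this kind.\<close>
definition locally_constant :: "((nat \<Rightarrow> nat) \<Rightarrow> 'a) \<Rightarrow> bool" where
  "locally_constant F \<longleftrightarrow> (\<forall>f. \<exists>n. \<forall>g. agree n g f \<longrightarrow> F g = F f)"

lemma locally_constant_const: "locally_constant (\<lambda>_. c)"
  by (simp add: locally_constant_def)

lemma locally_constant_comp:
  assumes "locally_constant F"
  shows "locally_constant (\<lambda>g. h (F g))"
  unfolding locally_constant_def
proof
  fix f
  obtain n where "\<forall>g. agree n g f \<longrightarrow> F g = F f"
    using assms unfolding locally_constant_def by blast
  then have "\<forall>g. agree n g f \<longrightarrow> h (F g) = h (F f)" by simp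
  then show "\<exists>n. \<forall>g. agree n g f \<longrightarrow> h (F g) = h (F f)" by blast
qed

lemma locally_constant_pair:
  assumes "locally_constant F" and "locally_constant H"
  shows "locally_constant (\<lambda>g. (F g, H g))"
  unfolding locally_constant_def
proof
  fix f
  obtain n1 where "\<forall>g. agree n1 g f \<longrightarrow> F g = F f"
    using assms(1) unfolding locally_constant_def by blast
  moreover obtain n2 where "\<forall>g. agree n2 g f \<longrightarrow> H g = H f"
    using assms(2) unfolding locally_constant_def by blast
  ultimately have "\<forall>g. agree (max n1 n2) g f \<longrightarrow> (F g, H g) = (F f, H f)" by simp
  then show "\<exists>n. \<forall>g. agree n g f \<longrightarrow> (F g, H g) = (F f, H f)" by blast
qed

lemma locally_constant_map:
  "(\<And>s. s \<in> set ts \<Longrightarrow> locally_constant (\<lambda>g. F g s)) \<Longrightarrow> locally_constant (\<lambda>g. map (F g) ts)"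
proof (induction ts)
  case Nil
  show ?case by (simp add: locally_constant_const)
next
  case (Cons s ts)
  then have "locally_constant (\<lambda>g. (F g s, map (F g) ts))"
    by (intro locally_constant_pair) auto
  from locally_constant_comp[OF this, of "\<lambda>p. fst p # snd p"] show ?case by simp
qed

lemma locally_constant_comp2:
  assumes "locally_constant F" and "locally_constant H"
  shows "locally_constant (\<lambda>g. h (F g) (H g))"
  using locally_constant_comp[OF locally_constant_pair[OF assms], of "case_prod h"] by simp

lemma locally_constant_initial_segment:
  assumes "locally_constant T"
  shows "locally_constant (\<lambda>g. map g [0..<Suc (T g)])"
  unfolding locally_constant_def
proof
  fix f
  obtain n where n: "\<forall>g. agree n g f \<longrightarrow> T g = T f"
    using assms unfolding locally_constant_def by blast
  have "map g [0..<Suc (T g)] = map f [0..<Suc (T f)]" if "agree (max n (Suc (T f))) g f" for g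
  proof -
    have "T g = T f" using that n by simp
    moreover have "\<forall>j<Suc (T f). g j = f j" using that by (simp add: agree_def)
    ultimately show ?thesis by (simp add: map_eq_conv del: upt_Suc)
  qed
  then show "\<exists>n. \<forall>g. agree n g f \<longrightarrow> map g [0..<Suc (T g)] = map f [0..<Suc (T f)]" by blast
qed

lemma locally_constant_open:
  assumes "locally_constant P"
  shows "open {f. P f}"
  unfolding open_baire_iff
proof
  fix f assume "f \<in> {f. P f}"
  moreover obtain n where "\<forall>g. agree n g f \<longrightarrow> P g = P f"
    using assms unfolding locally_constant_def by blast
  ultimately show "\<exists>n. \<forall>g. agree n g f \<longrightarrow> g \<in> {f. P f}" by auto
qed

lemma image_uminus_iff: "(X :: 'a set) \<in> uminus ` Y \<longleftrightarrow> - X \<in> Y"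
  by (metis double_compl image_iff)

lemma bDelta_iff: "X \<in> bDelta n \<longleftrightarrow> X \<in> bSigma n \<and> - X \<in> bSigma n"
  by (simp add: bDelta_def bPi_def image_uminus_iff)

lemma locally_constant_delta1:
  assumes "locally_constant P"
  shows "{f. P f} \<in> bDelta 1"
proof -
  have "open {f. P f}" "open {f. \<not> P f}"
    using assms locally_constant_comp[OF assms, of Not] by (auto intro: locally_constant_open)
  moreover have "- {f. P f} = {f. \<not> P f}" by auto
  ultimately show ?thesis by (simp add: bDelta_iff)
qed

section \<open>Closure properties of the boldface classes\<close>

lemma bSigma_Suc_Suc_iff:
  "X \<in> bSigma (Suc (Suc n)) \<longleftrightarrow> (\<exists>B. (\<forall>i::nat. B i \<in> bSigma (Suc n)) \<and> X = (\<Union>i. - B i))"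
proof
  assume "X \<in> bSigma (Suc (Suc n))"
  then obtain A where "\<forall>i::nat. A i \<in> uminus ` bSigma (Suc n)" "X = (\<Union>i. A i)" by auto
  then show "\<exists>B. (\<forall>i::nat. B i \<in> bSigma (Suc n)) \<and> X = (\<Union>i. - B i)"
    by (intro exI[of _ "\<lambda>i. - A i"]) (auto simp: image_uminus_iff)
next
  assume "\<exists>B. (\<forall>i::nat. B i \<in> bSigma (Suc n)) \<and> X = (\<Union>i. - B i)"
  then obtain B where "\<forall>i::nat. B i \<in> bSigma (Suc n)" "X = (\<Union>i. - B i)" by blast
  then show "X \<in> bSigma (Suc (Suc n))"
    by (auto simp: image_uminus_iff intro!: exI[of _ "\<lambda>i. - B i"])
qed

declare bSigma.simps(3) [simp del]

lemma bSigma_Suc_SucI: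
  assumes "\<And>i::nat. B i \<in> bSigma (Suc n)"
  shows "(\<Union>i. - B i) \<in> bSigma (Suc (Suc n))"
  using assms bSigma_Suc_Suc_iff by blast

lemma bSigma_Suc_SucE:
  assumes "X \<in> bSigma (Suc (Suc n))"
  obtains B where "\<forall>i::nat. B i \<in> bSigma (Suc n)" and "X = (\<Union>i. - B i)"
  using assms bSigma_Suc_Suc_iff by blast

lemma UN_prod_decode:
  "(\<Union>i::nat. \<Union>j::nat. X i j) = (\<Union>k. X (fst (prod_decode k)) (snd (prod_decode k)))"
proof (rule set_eqI)
  fix x
  show "x \<in> (\<Union>i. \<Union>j. X i j) \<longleftrightarrow> x \<in> (\<Union>k. X (fst (prod_decode k)) (snd (prod_decode k)))"
  proof
    assume "x \<in> (\<Union>i. \<Union>j. X i j)"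
    then obtain i j where "x \<in> X i j" by blast
    then have "x \<in> X (fst (prod_decode (prod_encode (i, j)))) (snd (prod_decode (prod_encode (i, j))))"
      by simp
    then show "x \<in> (\<Union>k. X (fst (prod_decode k)) (snd (prod_decode k)))" by blast
  qed blast
qed

lemma bSigma_UN:
  assumes "\<And>i::nat. A i \<in> bSigma (Suc n)"
  shows "(\<Union>i. A i) \<in> bSigma (Suc n)"
proof (cases n)
  case 0
  then show ?thesis using assms by auto
next
  case (Suc m)
  have "\<forall>i. \<exists>B. (\<forall>j::nat. B j \<in> bSigma (Suc m)) \<and> A i = (\<Union>j. - B j)"
    using assms bSigma_Suc_Suc_iff unfolding Suc by blast
  from choice[OF this] obtain B
    where B: "\<forall>i. (\<forall>j::nat. B i j \<in> bSigma (Suc m)) \<and> A i = (\<Union>j. - B i j)"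
    by blast
  have "(\<Union>i. A i) = (\<Union>i. \<Union>j. - B i j)" using B by auto
  also have "\<dots> = (\<Union>k. - B (fst (prod_decode k)) (snd (prod_decode k)))"
    by (rule UN_prod_decode)
  also have "\<dots> \<in> bSigma (Suc n)"
    unfolding Suc by (rule bSigma_Suc_SucI) (use B in blast)
  finally show ?thesis .
qed

lemma bSigma_Un:
  assumes "A \<in> bSigma (Suc n)" and "B \<in> bSigma (Suc n)"
  shows "A \<union> B \<in> bSigma (Suc n)"
proof -
  have "A \<union> B = (\<Union>i::nat. if i = 0 then A else B)"
  proof
    have "A \<subseteq> (\<Union>i::nat. if i = 0 then A else B)" by (rule SUP_upper2[of 0]) auto
    moreover have "B \<subseteq> (\<Union>i::nat. if i = 0 then A else B)" by (rule SUP_upper2[of 1]) auto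
    ultimately show "A \<union> B \<subseteq> (\<Union>i::nat. if i = 0 then A else B)" by blast
  qed auto
  also have "\<dots> \<in> bSigma (Suc n)" using assms by (intro bSigma_UN) auto
  finally show ?thesis .
qed

lemma bSigma_Int:
  assumes "A \<in> bSigma (Suc n)" and "B \<in> bSigma (Suc n)"
  shows "A \<inter> B \<in> bSigma (Suc n)"
proof (cases n)
  case 0
  then show ?thesis using assms by auto
next
  case (Suc m)
  obtain EA :: "nat \<Rightarrow> (nat \<Rightarrow> nat) set" where EA: "\<forall>i. EA i \<in> bSigma (Suc m)" "A = (\<Union>i. - EA i)"
    using assms(1) unfolding Suc by (rule bSigma_Suc_SucE)
  obtain EB :: "nat \<Rightarrow> (nat \<Rightarrow> nat) set" where EB: "\<forall>i. EB i \<in> bSigma (Suc m)" "B = (\<Union>i. - EB i)"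
    using assms(2) unfolding Suc by (rule bSigma_Suc_SucE)
  have "A \<inter> B = (\<Union>i. \<Union>j. - (EA i \<union> EB j))" using EA(2) EB(2) by auto
  also have "\<dots> = (\<Union>k. - (EA (fst (prod_decode k)) \<union> EB (snd (prod_decode k))))"
    by (rule UN_prod_decode)
  also have "\<dots> \<in> bSigma (Suc n)"
    unfolding Suc by (intro bSigma_Suc_SucI bSigma_Un) (simp_all add: EA(1) EB(1))
  finally show ?thesis .
qed

lemma bSigma_empty_UNIV: "{} \<in> bSigma (Suc n) \<and> UNIV \<in> bSigma (Suc n)"
proof (induction n)
  case 0
  then show ?case by auto
next
  case (Suc n)
  have "(\<Union>i::nat. - UNIV) \<in> bSigma (Suc (Suc n))" by (rule bSigma_Suc_SucI) (use Suc in blast)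
  moreover have "(\<Union>i::nat. - {}) \<in> bSigma (Suc (Suc n))" by (rule bSigma_Suc_SucI) (use Suc in blast)
  ultimately show ?case by simp
qed

text \<open>An open set is the countable union of the closed sets of points all of
  whose n-cylinders lie inside it.\<close>
lemma open_in_bSigma2:
  assumes "open U"
  shows "U \<in> bSigma (Suc (Suc 0))"
proof -
  define W where "W n = {f. \<forall>g. agree n g f \<longrightarrow> g \<in> U}" for n
  have "open (- W n)" for n
    unfolding open_baire_iff W_def
  proof
    fix f assume "f \<in> - {f. \<forall>g. agree n g f \<longrightarrow> g \<in> U}"
    then obtain g where "agree n g f" "g \<notin> U" by auto
    then have "h \<in> - {f. \<forall>g. agree n g f \<longrightarrow> g \<in> U}" if "agree n h f" for h
    proof -
      have "agree n g h" using \<open>agree n g f\<close> that by (simp add: agree_def)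
      then show ?thesis using \<open>g \<notin> U\<close> by blast
    qed
    then show "\<exists>k. \<forall>h. agree k h f \<longrightarrow> h \<in> - {f. \<forall>g. agree n g f \<longrightarrow> g \<in> U}" by blast
  qed
  moreover have "U = (\<Union>n. - (- W n))"
  proof (intro equalityI subsetI)
    fix f assume "f \<in> U"
    then obtain n where "\<forall>g. agree n g f \<longrightarrow> g \<in> U" using assms unfolding open_baire_iff by blast
    then show "f \<in> (\<Union>n. - (- W n))" by (auto simp: W_def)
  next
    fix f assume "f \<in> (\<Union>n. - (- W n))"
    then obtain n where "\<forall>g. agree n g f \<longrightarrow> g \<in> U" by (auto simp: W_def)
    moreover have "agree n f f" by (simp add: agree_def)
    ultimately show "f \<in> U" by blast
  qed
  ultimately show ?thesis
    using bSigma_Suc_SucI[of "\<lambda>n. - W n" 0] by simp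
qed

lemma bSigma_mono: "bSigma (Suc n) \<subseteq> bSigma (Suc (Suc n))"
proof (induction n)
  case 0
  show ?case using open_in_bSigma2 by auto
next
  case (Suc n)
  show ?case
  proof
    fix X assume "X \<in> bSigma (Suc (Suc n))"
    then obtain B :: "nat \<Rightarrow> (nat \<Rightarrow> nat) set" where "\<forall>i. B i \<in> bSigma (Suc n)" "X = (\<Union>i. - B i)"
      by (rule bSigma_Suc_SucE)
    then show "X \<in> bSigma (Suc (Suc (Suc n)))"
      using Suc by (auto intro!: bSigma_Suc_SucI)
  qed
qed

lemma bSigma_in_next_bDelta:
  assumes "X \<in> bSigma (Suc n)"
  shows "X \<in> bDelta (Suc (Suc n))"
proof -
  have "- X = (\<Union>i::nat. - X)" by simp
  also have "\<dots> \<in> bSigma (Suc (Suc n))" using assms by (rule bSigma_Suc_SucI)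
  finally show ?thesis using assms bSigma_mono by (auto simp: bDelta_iff)
qed

lemma bDelta_Compl: "X \<in> bDelta n \<Longrightarrow> - X \<in> bDelta n"
  by (simp add: bDelta_iff)

lemma bDelta_Int: "X \<in> bDelta (Suc n) \<Longrightarrow> Y \<in> bDelta (Suc n) \<Longrightarrow> X \<inter> Y \<in> bDelta (Suc n)"
  by (simp add: bDelta_iff bSigma_Int bSigma_Un)

lemma bDelta_Un: "X \<in> bDelta (Suc n) \<Longrightarrow> Y \<in> bDelta (Suc n) \<Longrightarrow> X \<union> Y \<in> bDelta (Suc n)"
  by (simp add: bDelta_iff bSigma_Int bSigma_Un)

text \<open>Delta classes are closed under arbitrary Boolean combinations of finitely
  many members: Q combines the truth values of the finitely many predicates P j.\<close>
lemma bDelta_boolean_comb: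
  assumes "finite I"
    and "\<And>j. j \<in> I \<Longrightarrow> {f. P j f} \<in> bDelta (Suc n)"
    and "\<And>p p'. (\<And>j. j \<in> I \<Longrightarrow> p j = p' j) \<Longrightarrow> Q p = Q p'"
  shows "{f. Q (\<lambda>j. P j f)} \<in> bDelta (Suc n)"
  using assms
proof (induction I arbitrary: Q rule: finite_induct)
  case empty
  have "Q (\<lambda>j. P j f) = Q (\<lambda>_. False)" for f by (rule empty.prems(2)) simp
  then have "{f. Q (\<lambda>j. P j f)} = {} \<or> {f. Q (\<lambda>j. P j f)} = UNIV" by auto
  then show ?case using bSigma_empty_UNIV by (auto simp: bDelta_iff)
next
  case (insert a I)
  have delta_a: "{f. P a f} \<in> bDelta (Suc n)" using insert.prems(1) by simp
  have delta_fixed: "{f. Q ((\<lambda>j. P j f)(a := b))} \<in> bDelta (Suc n)" for b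
  proof (rule insert.IH[of "\<lambda>p. Q (p(a := b))"])
    show "\<And>j. j \<in> I \<Longrightarrow> {f. P j f} \<in> bDelta (Suc n)" using insert.prems(1) by simp
    fix p p' :: "'a \<Rightarrow> bool" assume "\<And>j. j \<in> I \<Longrightarrow> p j = p' j"
    then show "Q (p(a := b)) = Q (p'(a := b))" by (intro insert.prems(2)) auto
  qed
  have "{f. Q (\<lambda>j. P j f)} = ({f. P a f} \<inter> {f. Q ((\<lambda>j. P j f)(a := True))}) \<union>
      (- {f. P a f} \<inter> {f. Q ((\<lambda>j. P j f)(a := False))})"
  proof (rule set_eqI)
    fix f
    have "(\<lambda>j. P j f)(a := P a f) = (\<lambda>j. P j f)" by auto
    then show "f \<in> {f. Q (\<lambda>j. P j f)} \<longleftrightarrow> f \<in> ({f. P a f} \<inter> {f. Q ((\<lambda>j. P j f)(a := True))}) \<union>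
        (- {f. P a f} \<inter> {f. Q ((\<lambda>j. P j f)(a := False))})"
      by (cases "P a f") auto
  qed
  also have "\<dots> \<in> bDelta (Suc n)"
    using delta_a delta_fixed by (intro bDelta_Un bDelta_Int bDelta_Compl)
  finally show ?case .
qed

text \<open>If membership in A n is eventually correct for S at every point, then S is
  the union over N of the sets contained in all A n with n \<ge> N; this lifts the
  Delta level by one.\<close>
lemma eventual_limit_bSigma:
  assumes "\<And>n. A n \<in> bDelta (Suc k)"
    and "\<And>f. eventually (\<lambda>n. f \<in> A n \<longleftrightarrow> f \<in> S) sequentially"
  shows "S \<in> bSigma (Suc (Suc k))"
proof -
  have "S = (\<Union>N. - (\<Union>n. - A (n + N)))"
  proof (intro set_eqI iffI)
    fix f assume "f \<in> S"
    moreover obtain N where "\<forall>n\<ge>N. f \<in> A n \<longleftrightarrow> f \<in> S"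
      using assms(2)[of f] unfolding eventually_sequentially by blast
    ultimately have "f \<in> - (\<Union>n. - A (n + N))" by simp
    then show "f \<in> (\<Union>N. - (\<Union>n. - A (n + N)))" by blast
  next
    fix f assume "f \<in> (\<Union>N. - (\<Union>n. - A (n + N)))"
    then obtain N where N: "\<forall>n. f \<in> A (n + N)" by auto
    obtain M where "\<forall>n\<ge>M. f \<in> A n \<longleftrightarrow> f \<in> S"
      using assms(2)[of f] unfolding eventually_sequentially by blast
    then show "f \<in> S" using N[rule_format, of M] by auto
  qed
  also have "\<dots> \<in> bSigma (Suc (Suc k))"
    using assms(1) by (intro bSigma_Suc_SucI bSigma_UN) (auto simp: bDelta_iff)
  finally show ?thesis .
qed

lemma eventual_limit_bDelta:
  assumes "\<And>n. A n \<in> bDelta (Suc k)"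
    and "\<And>f. eventually (\<lambda>n. f \<in> A n \<longleftrightarrow> f \<in> S) sequentially"
  shows "S \<in> bDelta (Suc (Suc k))"
proof -
  have "- S \<in> bSigma (Suc (Suc k))"
  proof (rule eventual_limit_bSigma)
    show "\<And>n. - A n \<in> bDelta (Suc k)" using assms(1) by (rule bDelta_Compl)
    show "\<And>f. eventually (\<lambda>n. f \<in> - A n \<longleftrightarrow> f \<in> - S) sequentially"
      using assms(2) by (auto elim: eventually_mono)
  qed
  then show ?thesis using eventual_limit_bSigma[OF assms] by (simp add: bDelta_iff)
qed

section \<open>Sets defined by formulas\<close>

lemma teval_cong: "(\<forall>x\<in>fv_trm t. e x = e' x) \<Longrightarrow> teval f e t = teval f e' t"
proof (induction t)
  case (App k w ts)
  then have "map (teval f e) ts = map (teval f e') ts" by (auto simp: map_eq_conv)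
  then show ?case by (simp only: teval.simps)
next
  case (GFap k G ts t)
  then have "map (teval f e) ts = map (teval f e') ts" by (auto simp: map_eq_conv)
  moreover have "teval f e t = teval f e' t" using GFap by auto
  ultimately show ?case by (simp only: teval.simps)
qed auto

text \<open>A term only inspects finitely many values of the interpretation f of the
  function symbol: the arguments of f, and the initial segments read by G o f.\<close>
lemma teval_locally_constant: "locally_constant (\<lambda>f. teval f e t)"
proof (induction t)
  case (Var x)
  show ?case by (simp add: locally_constant_const)
next
  case (Cst n)
  show ?case by (simp add: locally_constant_const)
next
  case (App k w ts)
  have "locally_constant (\<lambda>f. map (teval f e) ts)" by (rule locally_constant_map) (rule App.IH)
  from locally_constant_comp[OF this, of w] show ?case by simp
next
  case (Fap t)
  have "locally_constant (\<lambda>f. map f [0..<Suc (teval f e t)])"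
    using Fap.IH by (rule locally_constant_initial_segment)
  from locally_constant_comp[OF this, of last] show ?case by simp
next
  case (GFap k G ts t)
  have args: "locally_constant (\<lambda>f. map (teval f e) ts)"
    by (rule locally_constant_map) (rule GFap.IH)
  have segment: "locally_constant (\<lambda>f. map f [0..<Suc (teval f e t)])"
    using GFap.IH by (intro locally_constant_initial_segment) simp
  from locally_constant_comp2[OF args segment, where h = G] show ?case by (simp del: upt_Suc)
qed

lemma qfree_locally_constant: "qfree \<phi> \<Longrightarrow> locally_constant (\<lambda>f. holds f e \<phi>)"
proof (induction \<phi>)
  case (Eq s t)
  from locally_constant_comp2[OF teval_locally_constant[of e s] teval_locally_constant[of e t], where h = "(=)"]
  show ?case by simp
next
  case (Pred k p ts)
  have "locally_constant (\<lambda>f. map (teval f e) ts)"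
    by (rule locally_constant_map) (rule teval_locally_constant)
  from locally_constant_comp[OF this, of "\<lambda>xs. xs \<in> p"] show ?case by simp
next
  case (Neg \<phi>)
  then have "locally_constant (\<lambda>f. holds f e \<phi>)" by simp
  from locally_constant_comp[OF this, of Not] show ?case by simp
next
  case (Conj \<phi> \<psi>)
  then have "locally_constant (\<lambda>f. holds f e \<phi>)" "locally_constant (\<lambda>f. holds f e \<psi>)" by simp_all
  from locally_constant_comp2[OF this, where h = "(\<and>)"] show ?case by simp
next
  case (Disj \<phi> \<psi>)
  then have "locally_constant (\<lambda>f. holds f e \<phi>)" "locally_constant (\<lambda>f. holds f e \<psi>)" by simp_all
  from locally_constant_comp2[OF this, where h = "(\<or>)"] show ?case by simp
next
  case (Imp \<phi> \<psi>)
  then have "locally_constant (\<lambda>f. holds f e \<phi>)" "locally_constant (\<lambda>f. holds f e \<psi>)" by simp_all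
  from locally_constant_comp2[OF this, where h = "(\<longrightarrow>)"] show ?case by simp
qed simp_all

text \<open>Sigma_k and Pi_k formulas define boldface Sigma^0_k and Pi^0_k sets: each
  quantifier over nat is a countable union or intersection.\<close>
lemma fm_sigma_pi_sets:
  "(SigmaF (Suc k) \<phi> \<longrightarrow> {f. holds f e \<phi>} \<in> bSigma (Suc k)) \<and>
   (PiF (Suc k) \<phi> \<longrightarrow> - {f. holds f e \<phi>} \<in> bSigma (Suc k))"
proof (induction k arbitrary: \<phi> e)
  case 0
  have clopen: "{f. holds f e q} \<in> bDelta 1" if "qfree q" for q e
    using that by (intro locally_constant_delta1 qfree_locally_constant)
  show ?case
  proof (intro conjI impI)
    assume "SigmaF (Suc 0) \<phi>"
    then obtain x q where "\<phi> = Ex x q" "qfree q" by auto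
    then have "{f. holds f e \<phi>} = (\<Union>n. {f. holds f (e(x := n)) q})" by auto
    also have "\<dots> \<in> bSigma (Suc 0)"
      using clopen[OF \<open>qfree q\<close>] by (intro bSigma_UN) (simp add: bDelta_iff)
    finally show "{f. holds f e \<phi>} \<in> bSigma (Suc 0)" .
  next
    assume "PiF (Suc 0) \<phi>"
    then obtain x q where "\<phi> = All x q" "qfree q" by auto
    then have "- {f. holds f e \<phi>} = (\<Union>n. - {f. holds f (e(x := n)) q})" by auto
    also have "\<dots> \<in> bSigma (Suc 0)"
      using clopen[OF \<open>qfree q\<close>] by (intro bSigma_UN) (simp add: bDelta_iff)
    finally show "- {f. holds f e \<phi>} \<in> bSigma (Suc 0)" .
  qed
next
  case (Suc k)
  show ?case
  proof (intro conjI impI)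
    assume "SigmaF (Suc (Suc k)) \<phi>"
    then obtain x q where "\<phi> = Ex x q" "PiF (Suc k) q" by auto
    then have "{f. holds f e \<phi>} = (\<Union>n. - (- {f. holds f (e(x := n)) q}))" by auto
    also have "\<dots> \<in> bSigma (Suc (Suc k))"
      by (rule bSigma_Suc_SucI) (use Suc \<open>PiF (Suc k) q\<close> in blast)
    finally show "{f. holds f e \<phi>} \<in> bSigma (Suc (Suc k))" .
  next
    assume "PiF (Suc (Suc k)) \<phi>"
    then obtain x q where "\<phi> = All x q" "SigmaF (Suc k) q" by auto
    then have "- {f. holds f e \<phi>} = (\<Union>n. - {f. holds f (e(x := n)) q})" by auto
    also have "\<dots> \<in> bSigma (Suc (Suc k))"
      by (rule bSigma_Suc_SucI) (use Suc \<open>SigmaF (Suc k) q\<close> in blast)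
    finally show "- {f. holds f e \<phi>} \<in> bSigma (Suc (Suc k))" .
  qed
qed

lemma DeltaF_set: "DeltaF m \<phi> \<Longrightarrow> {f. holds f e \<phi>} \<in> bDelta (Suc (m - 1))"
proof (cases m)
  case 0
  assume "DeltaF m \<phi>"
  then have "{f. holds f e \<phi>} \<in> bDelta 1"
    using 0 by (intro locally_constant_delta1 qfree_locally_constant) simp
  then show ?thesis using 0 by simp
next
  case (Suc k)
  assume "DeltaF m \<phi>"
  then obtain \<psi> \<theta> where \<psi>: "SigmaF (Suc k) \<psi>" "fm_equiv \<phi> \<psi>" and \<theta>: "PiF (Suc k) \<theta>" "fm_equiv \<phi> \<theta>"
    using Suc by auto
  have "{f. holds f e \<phi>} = {f. holds f e \<psi>}" "{f. holds f e \<phi>} = {f. holds f e \<theta>}"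
    using \<psi>(2) \<theta>(2) unfolding fm_equiv_def by auto
  moreover have "{f. holds f e \<psi>} \<in> bSigma (Suc k)" "- {f. holds f e \<theta>} \<in> bSigma (Suc k)"
    using fm_sigma_pi_sets \<psi>(1) \<theta>(1) by blast+
  ultimately show ?thesis using Suc by (simp add: bDelta_iff)
qed

section \<open>Guessable sets are Delta^0_{m+1}\<close>

text \<open>The n-th guess is a Boolean combination of the finitely many Delta sets
  defined by the first n+1 sentences, and S is the eventual limit of the guesses.\<close>
lemma guessable_imp_bDelta:
  assumes "guessable m S"
  shows "S \<in> bDelta (Suc (Suc (m - 1)))"
proof -
  obtain \<Sigma> :: "sym set" and phi :: "nat \<Rightarrow> fm" and G :: "nat list \<Rightarrow> nat" where "countable \<Sigma> \<and>
      range phi = {\<phi>. sentence \<phi> \<and> DeltaF m \<phi> \<and> syms_fm \<phi> \<subseteq> \<Sigma>} \<and>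
      (\<forall>f. (\<lambda>n. G (map (\<lambda>i. fval f (phi i)) [0..<Suc n])) \<longlonglongrightarrow> (if f \<in> S then 1 else 0))"
    using assms unfolding guessable_def by (elim exE) (erule that)
  then have rng: "range phi = {\<phi>. sentence \<phi> \<and> DeltaF m \<phi> \<and> syms_fm \<phi> \<subseteq> \<Sigma>}"
    and lim: "\<forall>f. (\<lambda>n. G (map (\<lambda>i. fval f (phi i)) [0..<Suc n])) \<longlonglongrightarrow> (if f \<in> S then 1 else 0)"
    by blast+
  have phi_delta: "{f. holds f (\<lambda>_. 0) (phi i)} \<in> bDelta (Suc (m - 1))" for i
  proof -
    have "phi i \<in> range phi" by simp
    then have "DeltaF m (phi i)" using rng by auto
    then show ?thesis by (rule DeltaF_set)
  qed
  define A where "A n = {f. G (map (\<lambda>i. fval f (phi i)) [0..<Suc n]) = 1}" for n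
  have "A n \<in> bDelta (Suc (m - 1))" for n
  proof -
    define Q where "Q p \<longleftrightarrow> G (map (\<lambda>i. if p i then 1 else 0) [0..<Suc n]) = 1" for p
    have "{f. Q (\<lambda>i. holds f (\<lambda>_. 0) (phi i))} \<in> bDelta (Suc (m - 1))"
    proof (rule bDelta_boolean_comb[where I = "{..n}" and P = "\<lambda>i f. holds f (\<lambda>_. 0) (phi i)" and Q = Q])
      fix p p' :: "nat \<Rightarrow> bool" assume "\<And>j. j \<in> {..n} \<Longrightarrow> p j = p' j"
      then have "map (\<lambda>i. if p i then 1 else 0) [0..<Suc n] = map (\<lambda>i. if p' i then 1 else (0::nat)) [0..<Suc n]"
        by (intro map_cong) auto
      then show "Q p = Q p'" unfolding Q_def by (simp only:)
    qed (simp_all only: finite_atMost phi_delta)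
    moreover have "{f. Q (\<lambda>i. holds f (\<lambda>_. 0) (phi i))} = A n"
      unfolding Q_def A_def fval_def by simp
    ultimately show ?thesis by simp
  qed
  moreover have "eventually (\<lambda>n. f \<in> A n \<longleftrightarrow> f \<in> S) sequentially" for f
  proof -
    have "eventually (\<lambda>n. G (map (\<lambda>i. fval f (phi i)) [0..<Suc n]) = (if f \<in> S then 1 else 0)) sequentially"
      using lim unfolding tendsto_discrete by blast
    then show ?thesis by (rule eventually_mono) (auto simp: A_def split: if_splits)
  qed
  ultimately show ?thesis by (rule eventual_limit_bDelta)
qed

section \<open>Delta^0_{k+2} sets as eventual limits of simpler sets\<close>

definition prefix_determined :: "nat \<Rightarrow> (nat \<Rightarrow> nat) set \<Rightarrow> bool" where
  "prefix_determined n A \<longleftrightarrow> (\<forall>f g. agree n g f \<longrightarrow> (g \<in> A \<longleftrightarrow> f \<in> A))"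

text \<open>The sets usable at stage n of a guess of order k+1: Delta^0_{k+1} sets, which
  for k = 0 moreover depend only on the first n values (these are exactly what a
  single quantifier-free sentence can express).\<close>
definition stage_set :: "nat \<Rightarrow> nat \<Rightarrow> (nat \<Rightarrow> nat) set \<Rightarrow> bool" where
  "stage_set k n A \<longleftrightarrow> A \<in> bDelta (Suc k) \<and> (k = 0 \<longrightarrow> prefix_determined n A)"

lemma prefix_determined_bDelta1:
  assumes "prefix_determined n A"
  shows "A \<in> bDelta 1"
proof -
  have "locally_constant (\<lambda>f. f \<in> A)"
    using assms unfolding locally_constant_def prefix_determined_def by blast
  from locally_constant_delta1[OF this] show ?thesis by simp
qed

lemma stage_set_boolean_comb:
  assumes fin: "finite I"
    and stage: "\<And>j. j \<in> I \<Longrightarrow> stage_set k n {f. P j f}"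
    and cong: "\<And>p p'. (\<And>j. j \<in> I \<Longrightarrow> p j = p' j) \<Longrightarrow> Q p = Q p'"
  shows "stage_set k n {f. Q (\<lambda>j. P j f)}"
  unfolding stage_set_def
proof
  show "{f. Q (\<lambda>j. P j f)} \<in> bDelta (Suc k)"
  proof (rule bDelta_boolean_comb[where P = P and Q = Q, OF fin])
    show "\<And>j. j \<in> I \<Longrightarrow> {f. P j f} \<in> bDelta (Suc k)"
      using stage unfolding stage_set_def by blast
    show "\<And>p p'. (\<And>j. j \<in> I \<Longrightarrow> p j = p' j) \<Longrightarrow> Q p = Q p'" by (rule cong)
  qed
  show "k = 0 \<longrightarrow> prefix_determined n {f. Q (\<lambda>j. P j f)}"
  proof
    assume "k = 0"
    then have det: "prefix_determined n {f. P j f}" if "j \<in> I" for j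
      using stage[OF that] unfolding stage_set_def by blast
    show "prefix_determined n {f. Q (\<lambda>j. P j f)}"
      unfolding prefix_determined_def
    proof (intro allI impI)
      fix f g assume "agree n g f"
      then have "P j g = P j f" if "j \<in> I" for j
        using det[OF that] unfolding prefix_determined_def by blast
      then have "Q (\<lambda>j. P j g) = Q (\<lambda>j. P j f)" by (rule cong)
      then show "g \<in> {f. Q (\<lambda>j. P j f)} \<longleftrightarrow> f \<in> {f. Q (\<lambda>j. P j f)}" by simp
    qed
  qed
qed

definition outer_approx :: "nat \<Rightarrow> (nat \<Rightarrow> nat) set \<Rightarrow> (nat \<Rightarrow> (nat \<Rightarrow> nat) set) \<Rightarrow> bool" where
  "outer_approx k B C \<longleftrightarrow> (\<forall>n. stage_set k n (C n)) \<and> (\<forall>n. - B \<subseteq> C n) \<and>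
     (\<forall>f\<in>B. eventually (\<lambda>n. f \<notin> C n) sequentially)"

text \<open>For open B, take as C n the set of points whose n-cylinder meets - B.\<close>
lemma open_outer_approx:
  assumes "open B"
  shows "\<exists>C. outer_approx 0 B C"
proof -
  define C where "C n = {f. \<exists>g. agree n g f \<and> g \<notin> B}" for n
  have det: "prefix_determined n (C n)" for n
    unfolding prefix_determined_def C_def mem_Collect_eq by (meson agree_sym agree_trans)
  then have "stage_set 0 n (C n)" for n
    using prefix_determined_bDelta1[OF det] by (simp add: stage_set_def)
  moreover have "- B \<subseteq> C n" for n
    unfolding C_def using agree_refl by blast
  moreover have "eventually (\<lambda>n. f \<notin> C n) sequentially" if "f \<in> B" for f
  proof -
    obtain K where K: "\<forall>g. agree K g f \<longrightarrow> g \<in> B"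
      using assms \<open>f \<in> B\<close> unfolding open_baire_iff by blast
    have "f \<notin> C n" if "K \<le> n" for n
      unfolding C_def using K agree_mono that by blast
    then show ?thesis unfolding eventually_sequentially by blast
  qed
  ultimately show ?thesis unfolding outer_approx_def by blast
qed

text \<open>Every Sigma^0_{k+1} set B admits an outer approximation; for k > 0, writing
  B = \<Union>l. - E l, take as C n the intersection of E 0, ..., E n.\<close>
lemma bSigma_outer_approx:
  assumes "B \<in> bSigma (Suc k)"
  shows "\<exists>C. outer_approx k B C"
proof (cases k)
  case 0
  then show ?thesis using assms open_outer_approx by simp
next
  case (Suc j)
  obtain E :: "nat \<Rightarrow> (nat \<Rightarrow> nat) set" where E: "\<forall>l. E l \<in> bSigma (Suc j)" "B = (\<Union>l. - E l)"
    using assms unfolding Suc by (rule bSigma_Suc_SucE)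
  define C where "C n = {f. \<forall>l\<le>n. f \<in> E l}" for n
  have "stage_set k n (C n)" for n
  proof -
    have "stage_set k n {f. (\<lambda>p. \<forall>l\<le>n. p l) (\<lambda>l. f \<in> E l)}"
    proof (rule stage_set_boolean_comb[where I = "{..n}" and P = "\<lambda>l f. f \<in> E l"])
      show "\<And>l. l \<in> {..n} \<Longrightarrow> stage_set k n {f. f \<in> E l}"
        using E(1) Suc by (simp add: stage_set_def bSigma_in_next_bDelta)
    qed auto
    then show ?thesis by (simp add: C_def)
  qed
  moreover have "- B \<subseteq> C n" for n
    using E(2) by (auto simp: C_def)
  moreover have "eventually (\<lambda>n. f \<notin> C n) sequentially" if "f \<in> B" for f
  proof -
    obtain l where "f \<notin> E l" using E(2) \<open>f \<in> B\<close> by auto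
    then have "\<forall>n\<ge>l. f \<notin> C n" by (auto simp: C_def)
    then show ?thesis unfolding eventually_sequentially by blast
  qed
  ultimately show ?thesis unfolding outer_approx_def by blast
qed

text \<open>Given witnesses C i (for S, approximating - BS i) and D i (for - S,
  approximating - BT i), guess at stage n that f \<in> S iff the first index i \<le> n
  at which some witness still holds is a C-witness.\<close>
definition first_witness ::
  "(nat \<Rightarrow> nat \<Rightarrow> (nat \<Rightarrow> nat) set) \<Rightarrow> (nat \<Rightarrow> nat \<Rightarrow> (nat \<Rightarrow> nat) set) \<Rightarrow> nat \<Rightarrow> (nat \<Rightarrow> nat) set"
  where "first_witness C D n = {f. \<exists>i\<le>n. f \<in> C i n \<and> (\<forall>i'<i. f \<notin> C i' n \<and> f \<notin> D i' n)}"

lemma first_witness_stage_set: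
  assumes "\<And>i. stage_set k n (C i n)" and "\<And>i. stage_set k n (D i n)"
  shows "stage_set k n (first_witness C D n)"
proof -
  define P where "P j f \<longleftrightarrow> f \<in> (if snd j then C (fst j) n else D (fst j) n)" for j f
  define Q where "Q p \<longleftrightarrow> (\<exists>i\<le>n. p (i, True) \<and> (\<forall>i'<i. \<not> p (i', True) \<and> \<not> p (i', False)))"
    for p :: "nat \<times> bool \<Rightarrow> bool"
  have "stage_set k n {f. Q (\<lambda>j. P j f)}"
  proof (rule stage_set_boolean_comb[where I = "{..n} \<times> UNIV" and P = P and Q = Q])
    show "\<And>j. j \<in> {..n} \<times> UNIV \<Longrightarrow> stage_set k n {f. P j f}"
      using assms by (simp add: P_def)
    fix p p' :: "nat \<times> bool \<Rightarrow> bool"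
    assume "\<And>j. j \<in> {..n} \<times> UNIV \<Longrightarrow> p j = p' j"
    then have eq: "p (i, b) = p' (i, b)" if "i \<le> n" for i b using that by simp
    have "(p (i, True) \<and> (\<forall>i'<i. \<not> p (i', True) \<and> \<not> p (i', False))) \<longleftrightarrow>
        (p' (i, True) \<and> (\<forall>i'<i. \<not> p' (i', True) \<and> \<not> p' (i', False)))" if "i \<le> n" for i
      using that by (simp add: eq)
    then show "Q p = Q p'" unfolding Q_def by blast
  qed simp
  moreover have "{f. Q (\<lambda>j. P j f)} = first_witness C D n"
    by (simp add: Q_def P_def first_witness_def)
  ultimately show ?thesis by simp
qed

lemma first_witness_in:
  assumes "\<forall>i<i0. f \<notin> C i n \<and> f \<notin> D i n" and "i0 \<le> n" and "f \<in> C i0 n"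
  shows "f \<in> first_witness C D n"
proof -
  have "i0 \<le> n \<and> f \<in> C i0 n \<and> (\<forall>i'<i0. f \<notin> C i' n \<and> f \<notin> D i' n)"
    using assms by blast
  then show ?thesis unfolding first_witness_def by blast
qed

lemma first_witness_out:
  assumes "\<forall>i<i0. f \<notin> C i n \<and> f \<notin> D i n" and "f \<notin> C i0 n" and "f \<in> D i0 n"
  shows "f \<notin> first_witness C D n"
proof
  assume "f \<in> first_witness C D n"
  then obtain i where i: "f \<in> C i n" "\<forall>i'<i. f \<notin> C i' n \<and> f \<notin> D i' n"
    unfolding first_witness_def by blast
  consider "i < i0" | "i = i0" | "i0 < i" by linarith
  then show False using i assms by cases blast+
qed

text \<open>If S = \<Union>i. - BS i and - S = \<Union>i. - BT i, let i0 be the least index with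
  f \<notin> BS i0 or f \<notin> BT i0.  All witnesses below i0 eventually vanish, and the
  witness at i0 that persists is the one for the correct side.\<close>
lemma first_witness_converges:
  assumes S: "S = (\<Union>i. - BS i)" and coS: "- S = (\<Union>i. - BT i)"
    and C: "\<And>i. outer_approx k (BS i) (C i)" and D: "\<And>i. outer_approx k (BT i) (D i)"
  shows "eventually (\<lambda>n. f \<in> first_witness C D n \<longleftrightarrow> f \<in> S) sequentially"
proof -
  have "\<exists>i. f \<notin> BS i \<or> f \<notin> BT i"
  proof (cases "f \<in> S")
    case True
    then show ?thesis using S by auto
  next
    case False
    then have "f \<in> - S" by simp
    then show ?thesis using coS by auto
  qed
  then obtain i0 where i0: "f \<notin> BS i0 \<or> f \<notin> BT i0"
    and below: "\<forall>i<i0. \<not> (f \<notin> BS i \<or> f \<notin> BT i)"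
    unfolding exists_least_iff[of "\<lambda>i. f \<notin> BS i \<or> f \<notin> BT i"] by blast
  have C_out: "eventually (\<lambda>n. f \<notin> C i n) sequentially" if "f \<in> BS i" for i
    using C[of i] that unfolding outer_approx_def by blast
  have D_out: "eventually (\<lambda>n. f \<notin> D i n) sequentially" if "f \<in> BT i" for i
    using D[of i] that unfolding outer_approx_def by blast
  have "eventually (\<lambda>n. \<forall>i\<in>{..<i0}. f \<notin> C i n \<and> f \<notin> D i n) sequentially"
  proof (rule eventually_ball_finite)
    show "\<forall>i\<in>{..<i0}. eventually (\<lambda>n. f \<notin> C i n \<and> f \<notin> D i n) sequentially"
    proof
      fix i assume "i \<in> {..<i0}"
      then have "f \<in> BS i" "f \<in> BT i" using below by auto
      then show "eventually (\<lambda>n. f \<notin> C i n \<and> f \<notin> D i n) sequentially"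
        by (intro eventually_conj C_out D_out)
    qed
  qed simp
  then have earlier_out: "eventually (\<lambda>n. \<forall>i<i0. f \<notin> C i n \<and> f \<notin> D i n) sequentially"
    by (rule eventually_mono) simp
  show ?thesis
  proof (cases "f \<in> S")
    case True
    then have "f \<in> BT i0" using coS by auto
    then have "f \<notin> BS i0" using i0 by blast
    then have C_in: "f \<in> C i0 n" for n using C[of i0] unfolding outer_approx_def by blast
    show ?thesis
      using eventually_conj[OF earlier_out eventually_ge_at_top[of i0]]
      by (rule eventually_mono) (use first_witness_in[of i0] C_in True in blast)
  next
    case False
    then have "f \<in> BS i0" using S by auto
    then have "f \<notin> BT i0" using i0 by blast
    then have D_in: "f \<in> D i0 n" for n using D[of i0] unfolding outer_approx_def by blast
    show ?thesis
      using eventually_conj[OF earlier_out C_out[OF \<open>f \<in> BS i0\<close>]]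
      by (rule eventually_mono) (use first_witness_out[of i0] D_in False in blast)
  qed
qed

lemma bDelta_eventual_limit_of_stage_sets:
  assumes "S \<in> bDelta (Suc (Suc k))"
  shows "\<exists>A. (\<forall>n. stage_set k n (A n)) \<and> (\<forall>f. eventually (\<lambda>n. f \<in> A n \<longleftrightarrow> f \<in> S) sequentially)"
proof -
  have "S \<in> bSigma (Suc (Suc k))" and "- S \<in> bSigma (Suc (Suc k))"
    using assms by (simp_all add: bDelta_iff)
  obtain BS :: "nat \<Rightarrow> (nat \<Rightarrow> nat) set" where BS: "\<forall>i. BS i \<in> bSigma (Suc k)" "S = (\<Union>i. - BS i)"
    using \<open>S \<in> bSigma (Suc (Suc k))\<close> by (rule bSigma_Suc_SucE)
  obtain BT :: "nat \<Rightarrow> (nat \<Rightarrow> nat) set" where BT: "\<forall>i. BT i \<in> bSigma (Suc k)" "- S = (\<Union>i. - BT i)"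
    using \<open>- S \<in> bSigma (Suc (Suc k))\<close> by (rule bSigma_Suc_SucE)
  have "\<forall>i. \<exists>C. outer_approx k (BS i) C" using BS(1) bSigma_outer_approx by blast
  then obtain C where C: "\<forall>i. outer_approx k (BS i) (C i)" by (metis choice)
  have "\<forall>i. \<exists>D. outer_approx k (BT i) D" using BT(1) bSigma_outer_approx by blast
  then obtain D where D: "\<forall>i. outer_approx k (BT i) (D i)" by (metis choice)
  have "stage_set k n (first_witness C D n)" for n
    using C D unfolding outer_approx_def by (intro first_witness_stage_set) blast+
  moreover have "eventually (\<lambda>n. f \<in> first_witness C D n \<longleftrightarrow> f \<in> S) sequentially" for f
    by (rule first_witness_converges[OF BS(2) BT(2) C[rule_format] D[rule_format]])
  ultimately show ?thesis by blast
qed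

section \<open>Defining sets by sentences\<close>

definition cylinder :: "nat list \<Rightarrow> (nat \<Rightarrow> nat) set" where
  "cylinder s = {g. \<forall>j<length s. g j = s ! j}"

lemma cylinder_initial_segment: "g \<in> cylinder (map f [0..<n]) \<longleftrightarrow> agree n g f"
  by (simp add: cylinder_def agree_def)

lemma open_cylinder_iff:
  assumes "open U"
  shows "f \<in> U \<longleftrightarrow> (\<exists>n. cylinder (map f [0..<Suc n]) \<subseteq> U)"
proof
  assume "f \<in> U"
  then obtain n where n: "\<forall>g. agree n g f \<longrightarrow> g \<in> U"
    using assms unfolding open_baire_iff by blast
  have "cylinder (map f [0..<Suc n]) \<subseteq> U"
  proof
    fix g assume "g \<in> cylinder (map f [0..<Suc n])"
    then have "agree (Suc n) g f" by (simp only: cylinder_initial_segment)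
    then have "agree n g f" by (rule agree_mono) simp
    then show "g \<in> U" using n by blast
  qed
  then show "\<exists>n. cylinder (map f [0..<Suc n]) \<subseteq> U" by blast
next
  assume "\<exists>n. cylinder (map f [0..<Suc n]) \<subseteq> U"
  then obtain n where "cylinder (map f [0..<Suc n]) \<subseteq> U" by blast
  moreover have "f \<in> cylinder (map f [0..<Suc n])"
    by (simp only: cylinder_initial_segment agree_refl)
  ultimately show "f \<in> U" by blast
qed

definition sigma_pi_definable :: "nat \<Rightarrow> (nat \<Rightarrow> (nat \<Rightarrow> nat) set) \<Rightarrow> trm \<Rightarrow> bool" where
  "sigma_pi_definable m A t \<longleftrightarrow>
     (\<exists>\<phi> \<psi>. wf_fm \<phi> \<and> wf_fm \<psi> \<and> SigmaF (Suc m) \<phi> \<and> PiF (Suc m) \<psi> \<and>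
        fv_fm \<phi> \<subseteq> fv_trm t \<and> fv_fm \<psi> \<subseteq> fv_trm t \<and>
        (\<forall>f e. holds f e \<phi> \<longleftrightarrow> f \<in> A (teval f e t)) \<and>
        (\<forall>f e. holds f e \<psi> \<longleftrightarrow> f \<notin> A (teval f e t)))"

text \<open>Open families: f \<in> A t iff some cylinder f(0), ..., f(n) lies inside A t,
  which a symbol G o f can test; one quantifier over n (variable 1) suffices.\<close>
lemma open_family_definable:
  assumes "\<forall>i. open (A i)" and "wf_trm t" and "fv_trm t \<subseteq> {x. Suc 0 < x}"
  shows "sigma_pi_definable 0 A t"
proof -
  define G where "G xs s = (if cylinder s \<subseteq> A (hd xs) then 1 else 0 :: nat)" for xs s :: "nat list"
  define x where "x = Suc 0"
  define \<theta> where "\<theta> = Eq (GFap 1 G [t] (Var x)) (Cst 1)"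
  have t_fresh: "teval f (e(x := n)) t = teval f e t" for f e n
    by (rule teval_cong) (use assms(3) x_def in auto)
  have \<theta>_iff: "holds f (e(x := n)) \<theta> \<longleftrightarrow> cylinder (map f [0..<Suc n]) \<subseteq> A (teval f e t)" for f e n
    by (simp add: \<theta>_def G_def t_fresh del: upt_Suc)
  have opens: "open (A i)" for i using assms(1) by simp
  have "holds f e (Ex x \<theta>) \<longleftrightarrow> f \<in> A (teval f e t)" for f e
    using \<theta>_iff open_cylinder_iff[OF opens] by simp
  moreover have "holds f e (All x (Neg \<theta>)) \<longleftrightarrow> f \<notin> A (teval f e t)" for f e
    using \<theta>_iff open_cylinder_iff[OF opens] by simp
  moreover have "wf_fm \<theta>" "qfree \<theta>" "fv_fm \<theta> - {x} \<subseteq> fv_trm t"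
    using assms(2) by (auto simp: \<theta>_def)
  ultimately show ?thesis unfolding sigma_pi_definable_def
    by (intro exI[of _ "Ex x \<theta>"] exI[of _ "All x (Neg \<theta>)"]) simp
qed

text \<open>Sigma^0_{m+1} families are uniformly definable at level m+1.  In the step,
  A i = \<Union>j. - B i j; the pair (t, j) is coded by a fresh variable m+2 and the
  formulas for B along the coded term get one more quantifier over j.  The
  variables 1, ..., m+1 remain reserved for the inner quantifiers.\<close>
lemma sigma_family_definable:
  assumes "\<forall>i. A i \<in> bSigma (Suc m)" and "wf_trm t" and "fv_trm t \<subseteq> {x. Suc m < x}"
  shows "sigma_pi_definable m A t"
  using assms
proof (induction m arbitrary: A t)
  case 0
  then show ?case using open_family_definable[of A t] by simp
next
  case (Suc m)
  have "\<forall>i. \<exists>B. (\<forall>j::nat. B j \<in> bSigma (Suc m)) \<and> A i = (\<Union>j. - B j)"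
    using Suc.prems(1) bSigma_Suc_Suc_iff by blast
  from choice[OF this] obtain B
    where B: "\<forall>i. (\<forall>j::nat. B i j \<in> bSigma (Suc m)) \<and> A i = (\<Union>j. - B i j)"
    by blast
  define B' where "B' k = B (fst (prod_decode k)) (snd (prod_decode k))" for k
  define x where "x = Suc (Suc m)"
  define pair where "pair xs = prod_encode (xs ! 0, xs ! 1)" for xs :: "nat list"
  define t' where "t' = App 2 pair [t, Var x]"
  have t'_eval: "teval f (e(x := n)) t' = prod_encode (teval f e t, n)" for f e n
  proof -
    have "teval f (e(x := n)) t = teval f e t"
      by (rule teval_cong) (use Suc.prems(3) x_def in auto)
    then show ?thesis by (simp add: t'_def pair_def)
  qed
  have B'_pair: "B' (prod_encode (a, n)) = B a n" for a n by (simp add: B'_def)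
  have "\<forall>k. B' k \<in> bSigma (Suc m)" using B by (simp add: B'_def)
  moreover have "wf_trm t'" "fv_trm t' \<subseteq> {x. Suc m < x}"
    using Suc.prems(2,3) by (auto simp: t'_def x_def)
  ultimately obtain \<phi>' \<psi>' where ih: "wf_fm \<phi>'" "wf_fm \<psi>'" "SigmaF (Suc m) \<phi>'" "PiF (Suc m) \<psi>'"
      "fv_fm \<phi>' \<subseteq> fv_trm t'" "fv_fm \<psi>' \<subseteq> fv_trm t'"
      "\<forall>f e. holds f e \<phi>' \<longleftrightarrow> f \<in> B' (teval f e t')" "\<forall>f e. holds f e \<psi>' \<longleftrightarrow> f \<notin> B' (teval f e t')"
    using Suc.IH unfolding sigma_pi_definable_def by blast
  have "holds f e (Ex x \<psi>') \<longleftrightarrow> (\<exists>n. f \<notin> B (teval f e t) n)" for f e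
    using ih(8) t'_eval B'_pair by simp
  also have "(\<exists>n. f \<notin> B (teval f e t) n) \<longleftrightarrow> f \<in> A (teval f e t)" for f e
    using B by auto
  finally have Ex_iff: "holds f e (Ex x \<psi>') \<longleftrightarrow> f \<in> A (teval f e t)" for f e .
  have "holds f e (All x \<phi>') \<longleftrightarrow> (\<forall>n. f \<in> B (teval f e t) n)" for f e
    using ih(7) t'_eval B'_pair by simp
  also have "(\<forall>n. f \<in> B (teval f e t) n) \<longleftrightarrow> f \<notin> A (teval f e t)" for f e
    using B by auto
  finally have All_iff: "holds f e (All x \<phi>') \<longleftrightarrow> f \<notin> A (teval f e t)" for f e .
  have "fv_trm t' - {x} \<subseteq> fv_trm t" by (auto simp: t'_def)
  then show ?case
    using Ex_iff All_iff ih(1-6) unfolding sigma_pi_definable_def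
    by (intro exI[of _ "Ex x \<psi>'"] exI[of _ "All x \<phi>'"]) auto
qed

text \<open>A set determined by the first n values is defined by the quantifier-free
  sentence asserting that the cylinder of f(0), ..., f(n) meets it.\<close>
lemma prefix_determined_qfree_sentence:
  assumes "prefix_determined n A"
  shows "\<exists>\<phi>. sentence \<phi> \<and> qfree \<phi> \<and> (\<forall>f. holds f (\<lambda>_. 0) \<phi> \<longleftrightarrow> f \<in> A)"
proof -
  define H where "H xs s = (if cylinder s \<inter> A \<noteq> {} then 1 else 0 :: nat)" for xs s :: "nat list"
  define \<phi> where "\<phi> = Eq (GFap 0 H [] (Cst n)) (Cst 1)"
  have "holds f (\<lambda>_. 0) \<phi> \<longleftrightarrow> f \<in> A" for f
  proof -
    have "holds f (\<lambda>_. 0) \<phi> \<longleftrightarrow> cylinder (map f [0..<Suc n]) \<inter> A \<noteq> {}"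
      by (simp add: \<phi>_def H_def del: upt_Suc)
    also have "\<dots> \<longleftrightarrow> f \<in> A"
    proof
      assume "cylinder (map f [0..<Suc n]) \<inter> A \<noteq> {}"
      then obtain g where "g \<in> cylinder (map f [0..<Suc n])" "g \<in> A" by blast
      then have "agree (Suc n) g f" by (simp only: cylinder_initial_segment)
      then have "agree n g f" by (rule agree_mono) simp
      then show "f \<in> A" using assms \<open>g \<in> A\<close> unfolding prefix_determined_def by blast
    next
      assume "f \<in> A"
      moreover have "f \<in> cylinder (map f [0..<Suc n])"
        by (simp only: cylinder_initial_segment agree_refl)
      ultimately show "cylinder (map f [0..<Suc n]) \<inter> A \<noteq> {}" by blast
    qed
    finally show ?thesis .
  qed
  moreover have "sentence \<phi>" "qfree \<phi>" by (simp_all add: sentence_def \<phi>_def)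
  ultimately show ?thesis by blast
qed

text \<open>A Delta^0_{k+1} set is defined by a Delta_{k+1} sentence: a Sigma_{k+1}
  sentence for the set, which is equivalent to a Pi_{k+1} sentence negating the
  Sigma_{k+1} definition of the complement.\<close>
lemma bDelta_sentence:
  assumes "A \<in> bDelta (Suc k)"
  shows "\<exists>\<phi>. sentence \<phi> \<and> DeltaF (Suc k) \<phi> \<and> (\<forall>f. holds f (\<lambda>_. 0) \<phi> \<longleftrightarrow> f \<in> A)"
proof -
  have "\<forall>i::nat. (\<lambda>_. A) i \<in> bSigma (Suc k)" and "\<forall>i::nat. (\<lambda>_. - A) i \<in> bSigma (Suc k)"
    using assms by (simp_all add: bDelta_iff)
  then have "\<exists>\<phi> \<psi>. wf_fm \<phi> \<and> wf_fm \<psi> \<and> SigmaF (Suc k) \<phi> \<and> PiF (Suc k) \<psi> \<and>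
               fv_fm \<phi> \<subseteq> {} \<and> fv_fm \<psi> \<subseteq> {} \<and>
               (\<forall>f e. holds f e \<phi> \<longleftrightarrow> f \<in> A) \<and> (\<forall>f e. holds f e \<psi> \<longleftrightarrow> f \<notin> A)"
       and "\<exists>\<phi> \<psi>. wf_fm \<phi> \<and> wf_fm \<psi> \<and> SigmaF (Suc k) \<phi> \<and> PiF (Suc k) \<psi> \<and>
               fv_fm \<phi> \<subseteq> {} \<and> fv_fm \<psi> \<subseteq> {} \<and>
               (\<forall>f e. holds f e \<phi> \<longleftrightarrow> f \<in> - A) \<and> (\<forall>f e. holds f e \<psi> \<longleftrightarrow> f \<notin> - A)"
    using sigma_family_definable[of "\<lambda>_. A" k "Cst 0"] sigma_family_definable[of "\<lambda>_. - A" k "Cst 0"]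
    by (simp_all add: sigma_pi_definable_def)
  then obtain \<phi> \<psi> where \<phi>: "wf_fm \<phi>" "SigmaF (Suc k) \<phi>" "fv_fm \<phi> \<subseteq> {}" "\<forall>f e. holds f e \<phi> \<longleftrightarrow> f \<in> A"
    and \<psi>: "wf_fm \<psi>" "PiF (Suc k) \<psi>" "\<forall>f e. holds f e \<psi> \<longleftrightarrow> f \<notin> - A"
    by blast
  have "fm_equiv \<phi> \<phi>" "fm_equiv \<phi> \<psi>" using \<phi>(4) \<psi>(3) by (simp_all add: fm_equiv_def)
  then have "DeltaF (Suc k) \<phi>" using \<phi>(1,2) \<psi>(1,2) by auto
  moreover have "sentence \<phi>" using \<phi>(1,3) by (simp add: sentence_def)
  ultimately show ?thesis using \<phi>(4) by blast
qed

lemma stage_set_sentence: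
  assumes "stage_set k n A" and "m = Suc k \<or> (m = 0 \<and> k = 0)"
  shows "\<exists>\<phi>. sentence \<phi> \<and> DeltaF m \<phi> \<and> (\<forall>f. holds f (\<lambda>_. 0) \<phi> \<longleftrightarrow> f \<in> A)"
  using assms(2)
proof
  assume "m = Suc k"
  then show ?thesis using assms(1) bDelta_sentence unfolding stage_set_def by blast
next
  assume "m = 0 \<and> k = 0"
  then have "prefix_determined n A" using assms(1) unfolding stage_set_def by blast
  then obtain \<phi> where "sentence \<phi>" "qfree \<phi>" "\<forall>f. holds f (\<lambda>_. 0) \<phi> \<longleftrightarrow> f \<in> A"
    using prefix_determined_qfree_sentence by blast
  then show ?thesis using \<open>m = 0 \<and> k = 0\<close> by (intro exI[of _ \<phi>]) simp
qed

section \<open>Countably many formulas over a countable alphabet\<close>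

lemma finite_syms_trm: "finite (syms_trm t)"
  by (induction t) auto

lemma finite_syms_fm: "finite (syms_fm \<phi>)"
  by (induction \<phi>) (auto simp: finite_syms_trm)

text \<open>Formula skeletons with the non-logical symbols replaced by numeric codes.
  The skeleton types are countable, and decoding the codes along an enumeration
  of a countable alphabet reaches every formula over that alphabet.\<close>
datatype trm_code = CVar nat | CCst nat | CApp nat "trm_code list" | CFap trm_code
  | CGFap nat "trm_code list" trm_code

datatype fm_code = CEq trm_code trm_code | CPred nat "trm_code list" | CNeg fm_code
  | CConj fm_code fm_code | CDisj fm_code fm_code | CImp fm_code fm_code
  | CEx nat fm_code | CAll nat fm_code

instance trm_code :: countable by countable_datatype
instance fm_code :: countable by countable_datatype

fun decode_trm :: "(nat \<Rightarrow> sym) \<Rightarrow> trm_code \<Rightarrow> trm" where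
  "decode_trm d (CVar x) = Var x"
| "decode_trm d (CCst n) = Cst n"
| "decode_trm d (CApp c ts) =
     (case d c of SFun k w \<Rightarrow> App k w (map (decode_trm d) ts) | _ \<Rightarrow> Var 0)"
| "decode_trm d (CFap t) = Fap (decode_trm d t)"
| "decode_trm d (CGFap c ts t) =
     (case d c of SGF k G \<Rightarrow> GFap k G (map (decode_trm d) ts) (decode_trm d t) | _ \<Rightarrow> Var 0)"

fun decode_fm :: "(nat \<Rightarrow> sym) \<Rightarrow> fm_code \<Rightarrow> fm" where
  "decode_fm d (CEq s t) = Eq (decode_trm d s) (decode_trm d t)"
| "decode_fm d (CPred c ts) =
     (case d c of SPred k p \<Rightarrow> Pred k p (map (decode_trm d) ts) | _ \<Rightarrow> Eq (Var 0) (Var 0))"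
| "decode_fm d (CNeg \<phi>) = Neg (decode_fm d \<phi>)"
| "decode_fm d (CConj \<phi> \<psi>) = Conj (decode_fm d \<phi>) (decode_fm d \<psi>)"
| "decode_fm d (CDisj \<phi> \<psi>) = Disj (decode_fm d \<phi>) (decode_fm d \<psi>)"
| "decode_fm d (CImp \<phi> \<psi>) = Imp (decode_fm d \<phi>) (decode_fm d \<psi>)"
| "decode_fm d (CEx x \<phi>) = Ex x (decode_fm d \<phi>)"
| "decode_fm d (CAll x \<phi>) = All x (decode_fm d \<phi>)"

lemma decode_trm_onto:
  assumes d: "\<forall>s\<in>\<Sigma>. d (c s) = s"
  shows "syms_trm t \<subseteq> \<Sigma> \<Longrightarrow> t \<in> range (decode_trm d)"
proof (induction t)
  case (Var x)
  have "decode_trm d (CVar x) = Var x" by simp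
  then show ?case by (metis rangeI)
next
  case (Cst n)
  have "decode_trm d (CCst n) = Cst n" by simp
  then show ?case by (metis rangeI)
next
  case (App k w ts)
  then have "\<forall>s\<in>set ts. \<exists>cs. s = decode_trm d cs" by auto
  then obtain cts where "ts = map (decode_trm d) cts" unfolding ex_map_conv[symmetric] by blast
  moreover have "d (c (SFun k w)) = SFun k w" using d App.prems by auto
  ultimately have "decode_trm d (CApp (c (SFun k w)) cts) = App k w ts" by simp
  then show ?case by (metis rangeI)
next
  case (Fap t)
  then obtain ct where "decode_trm d ct = t" by auto
  then have "decode_trm d (CFap ct) = Fap t" by simp
  then show ?case by (metis rangeI)
next
  case (GFap k G ts t)
  then have "\<forall>s\<in>set ts. \<exists>cs. s = decode_trm d cs" by auto
  then obtain cts where "ts = map (decode_trm d) cts" unfolding ex_map_conv[symmetric] by blast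
  moreover obtain ct where "decode_trm d ct = t" using GFap by auto
  moreover have "d (c (SGF k G)) = SGF k G" using d GFap.prems by auto
  ultimately have "decode_trm d (CGFap (c (SGF k G)) cts ct) = GFap k G ts t" by simp
  then show ?case by (metis rangeI)
qed

lemma decode_fm_onto:
  assumes d: "\<forall>s\<in>\<Sigma>. d (c s) = s"
  shows "syms_fm \<phi> \<subseteq> \<Sigma> \<Longrightarrow> \<phi> \<in> range (decode_fm d)"
proof (induction \<phi>)
  case (Eq s t)
  then obtain cs ct where "decode_trm d cs = s" "decode_trm d ct = t"
    using decode_trm_onto[OF d, of s] decode_trm_onto[OF d, of t] by auto
  then have "decode_fm d (CEq cs ct) = Eq s t" by simp
  then show ?case by (metis rangeI)
next
  case (Pred k p ts)
  then have "\<forall>s\<in>set ts. \<exists>cs. s = decode_trm d cs" using decode_trm_onto[OF d] by auto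
  then obtain cts where "ts = map (decode_trm d) cts" unfolding ex_map_conv[symmetric] by blast
  moreover have "d (c (SPred k p)) = SPred k p" using d Pred.prems by auto
  ultimately have "decode_fm d (CPred (c (SPred k p)) cts) = Pred k p ts" by simp
  then show ?case by (metis rangeI)
next
  case (Neg \<phi>)
  then obtain c1 where "decode_fm d c1 = \<phi>" by auto
  then have "decode_fm d (CNeg c1) = Neg \<phi>" by simp
  then show ?case by (metis rangeI)
next
  case (Conj \<phi> \<psi>)
  then obtain c1 c2 where "decode_fm d c1 = \<phi>" "decode_fm d c2 = \<psi>" by auto
  then have "decode_fm d (CConj c1 c2) = Conj \<phi> \<psi>" by simp
  then show ?case by (metis rangeI)
next
  case (Disj \<phi> \<psi>)
  then obtain c1 c2 where "decode_fm d c1 = \<phi>" "decode_fm d c2 = \<psi>" by auto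
  then have "decode_fm d (CDisj c1 c2) = Disj \<phi> \<psi>" by simp
  then show ?case by (metis rangeI)
next
  case (Imp \<phi> \<psi>)
  then obtain c1 c2 where "decode_fm d c1 = \<phi>" "decode_fm d c2 = \<psi>" by auto
  then have "decode_fm d (CImp c1 c2) = Imp \<phi> \<psi>" by simp
  then show ?case by (metis rangeI)
next
  case (Ex x \<phi>)
  then obtain c1 where "decode_fm d c1 = \<phi>" by auto
  then have "decode_fm d (CEx x c1) = Ex x \<phi>" by simp
  then show ?case by (metis rangeI)
next
  case (All x \<phi>)
  then obtain c1 where "decode_fm d c1 = \<phi>" by auto
  then have "decode_fm d (CAll x c1) = All x \<phi>" by simp
  then show ?case by (metis rangeI)
qed

lemma countable_fms: "countable \<Sigma> \<Longrightarrow> countable {\<phi>. syms_fm \<phi> \<subseteq> \<Sigma>}"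
proof -
  assume "countable \<Sigma>"
  then have "\<forall>s\<in>\<Sigma>. from_nat_into \<Sigma> (to_nat_on \<Sigma> s) = s" by simp
  then have "{\<phi>. syms_fm \<phi> \<subseteq> \<Sigma>} \<subseteq> range (decode_fm (from_nat_into \<Sigma>))"
    using decode_fm_onto by blast
  then show ?thesis by (rule countable_subset) simp
qed

section \<open>Delta^0_{m+1} sets are guessable\<close>

lemma interleaved_enumeration:
  fixes \<theta> :: "nat \<Rightarrow> 'a"
  assumes "countable X" and "\<And>n. \<theta> n \<in> X"
  shows "\<exists>phi. range phi = X \<and> (\<forall>n. phi (2 * n) = \<theta> n)"
proof -
  define phi where "phi i = (if even i then \<theta> (i div 2) else from_nat_into X (i div 2))" for i
  have "range phi = X"
  proof
    show "range phi \<subseteq> X"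
      unfolding phi_def using assms(2) from_nat_into[of X] by auto
    show "X \<subseteq> range phi"
    proof
      fix \<phi> assume "\<phi> \<in> X"
      then have "phi (2 * to_nat_on X \<phi> + 1) = \<phi>" unfolding phi_def using assms(1) by simp
      then show "\<phi> \<in> range phi" by (metis rangeI)
    qed
  qed
  moreover have "phi (2 * n) = \<theta> n" for n by (simp add: phi_def)
  ultimately show ?thesis by blast
qed

text \<open>If sentences theta n of the admissible complexity define sets converging
  to S, then S is guessable: list the theta n at the even positions of an
  enumeration of all sentences over their (countable) alphabet; the guess after
  reading positions 0..n is the value of the last theta read.\<close>
lemma guessable_from_sentences:
  assumes \<theta>: "\<And>n. sentence (\<theta> n) \<and> DeltaF m (\<theta> n)"
    and lim: "\<And>f. eventually (\<lambda>n. holds f (\<lambda>_. 0) (\<theta> n) \<longleftrightarrow> f \<in> S) sequentially"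
  shows "guessable m S"
proof -
  define \<Sigma> where "\<Sigma> = (\<Union>n. syms_fm (\<theta> n))"
  have countable_\<Sigma>: "countable \<Sigma>"
    unfolding \<Sigma>_def by (rule countable_UN) (auto intro: countable_finite finite_syms_fm)
  define X where "X = {\<phi>. sentence \<phi> \<and> DeltaF m \<phi> \<and> syms_fm \<phi> \<subseteq> \<Sigma>}"
  have countable_X: "countable X"
    unfolding X_def by (rule countable_subset[OF _ countable_fms[OF countable_\<Sigma>]]) auto
  have "\<theta> n \<in> X" for n
    using \<theta> unfolding X_def \<Sigma>_def by auto
  then obtain phi where rng: "range phi = X" and even_pos: "\<forall>n. phi (2 * n) = \<theta> n"
    using interleaved_enumeration[OF countable_X] by blast
  define G where "G L = L ! (2 * ((length L - 1) div 2))" for L :: "nat list"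
  have G_reads_theta: "G (map (\<lambda>i. fval f (phi i)) [0..<Suc n]) = fval f (\<theta> (n div 2))" for f n
  proof -
    have "2 * (n div 2) < Suc n" by simp
    then have "map (\<lambda>i. fval f (phi i)) [0..<Suc n] ! (2 * (n div 2)) = fval f (phi (2 * (n div 2)))"
      by (subst nth_map_upt) auto
    then show ?thesis unfolding G_def using even_pos by (simp del: upt_Suc)
  qed
  have "(\<lambda>n. G (map (\<lambda>i. fval f (phi i)) [0..<Suc n])) \<longlonglongrightarrow> (if f \<in> S then 1 else 0)" for f
  proof -
    have "eventually (\<lambda>n. holds f (\<lambda>_. 0) (\<theta> (n div 2)) \<longleftrightarrow> f \<in> S) sequentially"
      using eventually_compose_filterlim[OF lim filterlim_at_top_div_const_nat[of 2]] by simp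
    then have "eventually (\<lambda>n. G (map (\<lambda>i. fval f (phi i)) [0..<Suc n]) = (if f \<in> S then 1 else 0)) sequentially"
      by (rule eventually_mono) (simp only: G_reads_theta, simp add: fval_def)
    then show ?thesis unfolding tendsto_discrete .
  qed
  then show ?thesis
    unfolding guessable_def using countable_\<Sigma> rng unfolding X_def by blast
qed

lemma bDelta_imp_guessable:
  assumes "S \<in> bDelta (Suc (Suc k))" and "m = Suc k \<or> (m = 0 \<and> k = 0)"
  shows "guessable m S"
proof -
  obtain A where A: "\<forall>n. stage_set k n (A n)"
    and A_lim: "\<forall>f. eventually (\<lambda>n. f \<in> A n \<longleftrightarrow> f \<in> S) sequentially"
    using bDelta_eventual_limit_of_stage_sets[OF assms(1)] by blast
  have "\<forall>n. \<exists>\<phi>. sentence \<phi> \<and> DeltaF m \<phi> \<and> (\<forall>f. holds f (\<lambda>_. 0) \<phi> \<longleftrightarrow> f \<in> A n)"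
    using A stage_set_sentence[OF _ assms(2)] by blast
  from choice[OF this] obtain \<theta>
    where \<theta>: "\<forall>n. sentence (\<theta> n) \<and> DeltaF m (\<theta> n) \<and> (\<forall>f. holds f (\<lambda>_. 0) (\<theta> n) \<longleftrightarrow> f \<in> A n)"
    by blast
  show ?thesis
  proof (rule guessable_from_sentences)
    show "\<And>n. sentence (\<theta> n) \<and> DeltaF m (\<theta> n)" using \<theta> by blast
    show "\<And>f. eventually (\<lambda>n. holds f (\<lambda>_. 0) (\<theta> n) \<longleftrightarrow> f \<in> S) sequentially"
      using A_lim \<theta> by simp
  qed
qed

theorem mainTheorem1:
  fixes S :: "(nat \<Rightarrow> nat) set"
  shows "(guessable 0 S \<longleftrightarrow> S \<in> bDelta 2) \<and>
         (\<forall>m::nat. m > 0 \<longrightarrow> (guessable m S \<longleftrightarrow> S \<in> bDelta (m + 1)))"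
proof
  show "guessable 0 S \<longleftrightarrow> S \<in> bDelta 2"
    using guessable_imp_bDelta[of 0 S] bDelta_imp_guessable[of S 0 0]
    by (auto simp: numeral_2_eq_2)
next
  show "\<forall>m::nat. m > 0 \<longrightarrow> (guessable m S \<longleftrightarrow> S \<in> bDelta (m + 1))"
  proof (intro allI impI)
    fix m :: nat assume "m > 0"
    then obtain k where k: "m = Suc k" using gr0_implies_Suc by blast
    then show "guessable m S \<longleftrightarrow> S \<in> bDelta (m + 1)"
      using guessable_imp_bDelta[of m S] bDelta_imp_guessable[of S k m] by auto
  qed
qed

end
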